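(* In the procedure of obtaining a 2-swap optimal solution for $P2\|C_{\max}$ with $n$ jobs (i.e., repeatedly replacing the current schedule by an improving 2-swap neighbor), the critical machine changes at most $O(n^2)$ times.
   Context: Problem $P2\|C_{\max}$: $n$ jobs with processing times $p_j>0$, two identical machines. A schedule $\sigma=(M_1,M_2)$ partitions the jobs into sets processed on machines 1 and 2; loads $L_i=\sum_{j\in M_i}p_j$, makespan $\max_iL_i$; a machine whose load equals the makespan is critical. A 2-swap neighbor is obtained by choosing $k'$ jobs on one machine and $k''$ on the other with $k'+k''\le2$ and interchanging their machine assignments; it is improving if its makespan is strictly smaller. A 2-swap optimal solution has no improving 2-swap neighbor. *)

theory Defs
  imports Complex_Main
begin

text \<open>Jobs are 0..<n with processing times p. A schedule is represented by the
set M1 of jobs on machine 1; machine 2 receives {0..<n} - M1.\<close>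

definition load1 :: "(nat \<Rightarrow> real) \<Rightarrow> nat set \<Rightarrow> real" where
  "load1 p M1 = (\<Sum>j\<in>M1. p j)"

definition load2 :: "nat \<Rightarrow> (nat \<Rightarrow> real) \<Rightarrow> nat set \<Rightarrow> real" where
  "load2 n p M1 = (\<Sum>j\<in>{0..<n} - M1. p j)"

definition makespan :: "nat \<Rightarrow> (nat \<Rightarrow> real) \<Rightarrow> nat set \<Rightarrow> real" where
  "makespan n p M1 = max (load1 p M1) (load2 n p M1)"

definition critical :: "nat \<Rightarrow> (nat \<Rightarrow> real) \<Rightarrow> nat set \<Rightarrow> nat" where
  "critical n p M1 = (if load2 n p M1 \<le> load1 p M1 then 1 else 2)"

definition two_swap_neighbor :: "nat \<Rightarrow> nat set \<Rightarrow> nat set \<Rightarrow> bool" where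
  "two_swap_neighbor n M1 M1' \<longleftrightarrow>
     (\<exists>A B. A \<subseteq> M1 \<and> B \<subseteq> {0..<n} - M1 \<and> card A + card B \<le> 2 \<and>
            M1' = (M1 - A) \<union> B)"

definition improving_2swap :: "nat \<Rightarrow> (nat \<Rightarrow> real) \<Rightarrow> nat set \<Rightarrow> nat set \<Rightarrow> bool" where
  "improving_2swap n p M1 M1' \<longleftrightarrow>
     two_swap_neighbor n M1 M1' \<and> makespan n p M1' < makespan n p M1"

end

theory Submission
  imports Defs "HOL-Library.Set_Algebras"
begin

text \<open>Let \<open>s = L\<^sub>1 - L\<^sub>2\<close> be the imbalance of a schedule. The makespan is
\<open>(\<Sum>p + |s|) / 2\<close> and machine 1 is critical iff \<open>s \<ge> 0\<close>, so along improving
steps \<open>|s|\<close> strictly decreases and the critical machine changes exactly when \<open>s\<close>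
changes sign. At such a step the jump \<open>|\<Delta>s|\<close> equals \<open>|s\<^sub>k| + |s\<^sub>k\<^sub>+\<^sub>1|\<close>, so
these jumps strictly decrease and are pairwise distinct. A 2-swap moves at most two jobs, so
\<open>\<Delta>s\<close> is twice a sum of two elements of \<open>{0} \<union> {\<plusminus>p\<^sub>j}\<close>, which leaves at most
\<open>(2n + 1)\<^sup>2\<close> possible values.\<close>

lemma sum_in_set_plus_if_card_le_2:
  fixes f :: "'a \<Rightarrow> 'b::comm_monoid_add"
  assumes "finite X" "card X \<le> 2" "f ` X \<subseteq> V" "0 \<in> V"
  shows "sum f X \<in> V + V"
proof -
  have "card X = 0 \<or> card X = 1 \<or> card X = 2" using assms(2) by linarith
  then consider "X = {}" | x where "X = {x}" | x y where "X = {x, y}" "x \<noteq> y"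
    using assms(1) by (auto simp: card_1_singleton_iff card_2_iff)
  then show ?thesis
  proof cases
    case 1
    then show ?thesis using set_plus_intro[OF assms(4) assms(4)] by simp
  next
    case 2
    then show ?thesis using set_plus_intro[of "f x" V 0 V] assms(3,4) by simp
  next
    case 3
    then show ?thesis using assms(3) by auto
  qed
qed

lemma card_set_plus_le:
  assumes "finite A" "finite B"
  shows "card (A + B) \<le> card A * card B"
  unfolding set_plus_image using assms card_image_le[of "A \<times> B"] by (simp add: card_cartesian_product)

lemma card_sign_changes_le_card_steps:
  fixes s :: "nat \<Rightarrow> real"
  assumes decr: "\<And>k. k < K \<Longrightarrow> \<bar>s (Suc k)\<bar> < \<bar>s k\<bar>"
    and steps: "\<And>k. k < K \<Longrightarrow> s (Suc k) - s k \<in> W" and "finite W"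
  shows "card {k. k < K \<and> (0 \<le> s (Suc k)) \<noteq> (0 \<le> s k)} \<le> card W"
proof -
  define S where "S = {k. k < K \<and> (0 \<le> s (Suc k)) \<noteq> (0 \<le> s k)}"
  define step where "step k = s (Suc k) - s k" for k
  have jump: "\<bar>step k\<bar> = \<bar>s (Suc k)\<bar> + \<bar>s k\<bar>" if "k \<in> S" for k
    using that unfolding S_def step_def by auto
  have "\<bar>s (Suc k)\<bar> \<le> \<bar>s k\<bar>" if "k \<in> {..<K}" for k
    using decr that by (simp add: less_imp_le)
  then have abs_le: "\<bar>s j\<bar> \<le> \<bar>s i\<bar>" if "i \<le> j" "j \<le> K" for i j
    by (rule lift_Suc_antimono_le_ivl[of "{..<K}"]) (use that in auto)
  have "\<bar>step l\<bar> < \<bar>step k\<bar>" if "k \<in> S" "l \<in> S" "k < l" for k l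
  proof -
    have "k < l" "l < K" using that unfolding S_def by auto
    then have "\<bar>s (Suc l)\<bar> \<le> \<bar>s (Suc k)\<bar>" "\<bar>s l\<bar> \<le> \<bar>s (Suc k)\<bar>"
      using abs_le[of "Suc k" "Suc l"] abs_le[of "Suc k" l] by simp_all
    moreover have "\<bar>s (Suc k)\<bar> < \<bar>s k\<bar>" using decr \<open>k < l\<close> \<open>l < K\<close> by simp
    ultimately show ?thesis using jump that(1,2) by simp
  qed
  then have "inj_on step S" by (intro linorder_inj_onI') (metis order_less_irrefl)
  moreover have "step ` S \<subseteq> W" using steps unfolding S_def step_def by auto
  ultimately show ?thesis unfolding S_def[symmetric] using card_inj_on_le \<open>finite W\<close> by blast
qed

definition imbalance :: "nat \<Rightarrow> (nat \<Rightarrow> real) \<Rightarrow> nat set \<Rightarrow> real" where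
  "imbalance n p M1 = load1 p M1 - load2 n p M1"

definition move_deltas :: "nat \<Rightarrow> (nat \<Rightarrow> real) \<Rightarrow> real set" where
  "move_deltas n p = insert 0 (p ` {0..<n} \<union> (\<lambda>j. - p j) ` {0..<n})"

lemma card_move_deltas: "card (move_deltas n p) \<le> 2 * n + 1"
proof -
  have "card (p ` {0..<n}) \<le> n" "card ((\<lambda>j. - p j) ` {0..<n}) \<le> n"
    using card_image_le[of "{0..<n}"] by fastforce+
  then have "card (p ` {0..<n} \<union> (\<lambda>j. - p j) ` {0..<n}) \<le> 2 * n"
    using card_Un_le[of "p ` {0..<n}" "(\<lambda>j. - p j) ` {0..<n}"] by linarith
  then show ?thesis unfolding move_deltas_def by (simp add: card_insert_if)
qed

lemma finite_move_deltas: "finite (move_deltas n p)"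
  unfolding move_deltas_def by simp

lemma load1_add_load2: "M \<subseteq> {0..<n} \<Longrightarrow> load1 p M + load2 n p M = sum p {0..<n}"
  unfolding load1_def load2_def by (metis finite_atLeastLessThan sum.subset_diff add.commute)

lemma makespan_eq_imbalance:
  "M \<subseteq> {0..<n} \<Longrightarrow> makespan n p M = (sum p {0..<n} + \<bar>imbalance n p M\<bar>) / 2"
  using load1_add_load2[of M n p] unfolding makespan_def imbalance_def by (auto simp: max_def)

lemma critical_eq_imbalance:
  "critical n p M = (if 0 \<le> imbalance n p M then 1 else 2)"
  unfolding critical_def imbalance_def by simp

lemma two_swap_neighbor_subset:
  "two_swap_neighbor n M M' \<Longrightarrow> M \<subseteq> {0..<n} \<Longrightarrow> M' \<subseteq> {0..<n}"
  unfolding two_swap_neighbor_def by auto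

lemma two_swap_load1_change:
  assumes "M \<subseteq> {0..<n}" "two_swap_neighbor n M M'"
  shows "load1 p M' - load1 p M \<in> move_deltas n p + move_deltas n p"
proof -
  obtain A B where A: "A \<subseteq> M" and B: "B \<subseteq> {0..<n} - M" and card: "card A + card B \<le> 2"
    and M': "M' = (M - A) \<union> B"
    using assms(2) unfolding two_swap_neighbor_def by blast
  have fin: "finite M" "finite A" "finite B"
    using assms(1) A B by (auto intro: finite_subset)
  define g where "g = case_sum p (\<lambda>j. - p j)"
  \<comment> \<open>On the disjoint sum \<open>B <+> A\<close> the moved jobs form one set of at most two items.\<close>
  have "load1 p M' - load1 p M = sum p B - sum p A"
  proof -
    have "sum p ((M - A) \<union> B) = sum p (M - A) + sum p B"
      using B fin by (intro sum.union_disjoint) auto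
    then show ?thesis unfolding load1_def M' using A fin by (simp add: sum_diff)
  qed
  also have "\<dots> = sum g (B <+> A)"
    using fin by (simp add: g_def sum.Plus comp_def sum_negf)
  also have "\<dots> \<in> move_deltas n p + move_deltas n p"
  proof (rule sum_in_set_plus_if_card_le_2)
    show "finite (B <+> A)" and "card (B <+> A) \<le> 2"
      using fin card by (simp_all add: card_Plus)
    show "g ` (B <+> A) \<subseteq> move_deltas n p" and "0 \<in> move_deltas n p"
      using A B assms(1) by (auto simp: g_def move_deltas_def)
  qed
  finally show ?thesis .
qed

lemma improving_2swap_run_subset:
  assumes "\<sigma> 0 \<subseteq> {0..<n}" and "\<And>k. k < K \<Longrightarrow> improving_2swap n p (\<sigma> k) (\<sigma> (Suc k))"
    and "k \<le> K"
  shows "\<sigma> k \<subseteq> {0..<n}"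
  using \<open>k \<le> K\<close>
proof (induction k)
  case (Suc k)
  then show ?case
    using assms(2)[of k] two_swap_neighbor_subset unfolding improving_2swap_def by force
qed (use assms(1) in simp)

lemma card_imbalance_steps: "card ((*) (2::real) ` (move_deltas n p + move_deltas n p)) \<le> (2 * n + 1)\<^sup>2"
proof -
  have "card ((*) (2::real) ` (move_deltas n p + move_deltas n p)) \<le> card (move_deltas n p + move_deltas n p)"
    by (rule card_image_le) (simp add: finite_move_deltas finite_set_plus)
  also have "\<dots> \<le> card (move_deltas n p) * card (move_deltas n p)"
    by (simp add: card_set_plus_le finite_move_deltas)
  also have "\<dots> \<le> (2 * n + 1)\<^sup>2"
    unfolding power2_eq_square using card_move_deltas by (intro mult_mono) auto
  finally show ?thesis .
qed

lemma improving_2swap_imbalance: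
  assumes M: "M \<subseteq> {0..<n}" and improving: "improving_2swap n p M M'"
  shows "\<bar>imbalance n p M'\<bar> < \<bar>imbalance n p M\<bar>"
    and "imbalance n p M' - imbalance n p M \<in> (*) 2 ` (move_deltas n p + move_deltas n p)"
proof -
  have neighbor: "two_swap_neighbor n M M'" and "makespan n p M' < makespan n p M"
    using improving unfolding improving_2swap_def by auto
  moreover have M': "M' \<subseteq> {0..<n}"
    using two_swap_neighbor_subset[OF neighbor M] .
  ultimately show "\<bar>imbalance n p M'\<bar> < \<bar>imbalance n p M\<bar>"
    using M by (simp add: makespan_eq_imbalance)
  have "imbalance n p M' - imbalance n p M = 2 * (load1 p M' - load1 p M)"
    using load1_add_load2[OF M, of p] load1_add_load2[OF M', of p] unfolding imbalance_def by simp
  then show "imbalance n p M' - imbalance n p M \<in> (*) 2 ` (move_deltas n p + move_deltas n p)"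
    using imageI[OF two_swap_load1_change[OF M neighbor], of "(*) 2"] by presburger
qed

theorem lemma6:
  shows "\<exists>C::real. \<forall>(n::nat) (p::nat \<Rightarrow> real) (\<sigma>::nat \<Rightarrow> nat set) (K::nat).
     (\<forall>j<n. p j > 0) \<and> \<sigma> 0 \<subseteq> {0..<n} \<and>
     (\<forall>k<K. improving_2swap n p (\<sigma> k) (\<sigma> (Suc k)))
     \<longrightarrow> real (card {k. k < K \<and> critical n p (\<sigma> (Suc k)) \<noteq> critical n p (\<sigma> k)})
           \<le> C * (real n)\<^sup>2 + C"
proof (intro exI[of _ 5] allI impI)
  fix n p \<sigma> K
  assume "(\<forall>j<n. p j > (0::real)) \<and> \<sigma> 0 \<subseteq> {0..<n} \<and>
     (\<forall>k<K. improving_2swap n p (\<sigma> k) (\<sigma> (Suc k)))"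
  then have start: "\<sigma> 0 \<subseteq> {0..<n}"
    and improving: "\<And>k. k < K \<Longrightarrow> improving_2swap n p (\<sigma> k) (\<sigma> (Suc k))"
    by auto
  note range = improving_2swap_run_subset[of \<sigma>, OF start improving]
  let ?changes = "{k. k < K \<and> critical n p (\<sigma> (Suc k)) \<noteq> critical n p (\<sigma> k)}"
  have "card ?changes
      = card {k. k < K \<and> (0 \<le> imbalance n p (\<sigma> (Suc k))) \<noteq> (0 \<le> imbalance n p (\<sigma> k))}"
    by (intro arg_cong[where f = card] Collect_cong) (simp add: critical_eq_imbalance)
  also have "\<dots> \<le> card ((*) 2 ` (move_deltas n p + move_deltas n p))"
    using improving_2swap_imbalance[OF range improving]
    by (intro card_sign_changes_le_card_steps) (auto simp: finite_move_deltas finite_set_plus)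
  also have "\<dots> \<le> (2 * n + 1)\<^sup>2"
    by (rule card_imbalance_steps)
  finally have "real (card ?changes) \<le> real ((2 * n + 1)\<^sup>2)"
    by (rule of_nat_mono)
  also have "\<dots> \<le> 5 * (real n)\<^sup>2 + 5"
    using zero_le_power2[of "real n - 2"] by (simp add: power2_eq_square algebra_simps)
  finally show "real (card ?changes) \<le> 5 * (real n)\<^sup>2 + 5" .
qed

end
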